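(* Let $f$ be as in the following setting: $f(x)=\prod_{j=1}^N(a_jx+b_j)^{d_j}$ with $N\ge1$, $a_j,b_j,d_j$ positive integers, and let $M_n:=\max_{1\le j\le N}\sqrt{a_jn+b_j}$. Then, as $n\to\infty$, $$\sum_{p\le M_n} v_p\big(\operatorname{lcm}(f(1),\dots,f(n))\big)\log p=O(\sqrt n),$$ where the sum runs over primes $p\le M_n$.
   Context: $v_p(a)$ denotes the exponent of the prime $p$ in the positive integer $a$. *)

theory Defs
  imports "HOL-Analysis.Analysis" "HOL-Computational_Algebra.Primes" "HOL-Library.Landau_Symbols"
begin

definition polyf :: "nat \<Rightarrow> (nat \<Rightarrow> nat) \<Rightarrow> (nat \<Rightarrow> nat) \<Rightarrow> (nat \<Rightarrow> nat) \<Rightarrow> nat \<Rightarrow> nat" where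
  "polyf N a b d x = (\<Prod>j=1..N. (a j * x + b j) ^ d j)"

definition Mn :: "nat \<Rightarrow> (nat \<Rightarrow> nat) \<Rightarrow> (nat \<Rightarrow> nat) \<Rightarrow> nat \<Rightarrow> real" where
  "Mn N a b n = Max ((\<lambda>j. sqrt (real (a j * n + b j))) ` {1..N})"

end

theory Submission
  imports Defs
begin

text \<open>
  Write X = (a_1 + ... + a_N + b_1 + ... + b_N) n, so that every linear factor value a_j k + b_j
  with 1 <= k <= n is at most X, and M_n <= sqrt X.  For a prime p let e_p(X) be the largest
  exponent with p^e <= X (the constant max_exponent below).  Every value of a linear factor has
  p-adic valuation at most e_p(X), hence v_p(lcm(f(1),...,f(n))) <= D e_p(X) with D = d_1 + ... + d_N.
  It therefore suffices to bound the purely arithmetic sum of e_p(X) log p over primes p <= sqrt X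
  by a multiple of sqrt X.  For p > X^(1/4) we have e_p(X) <= 3, so these primes contribute at most
  3 theta(sqrt X) <= 3 log 4 sqrt X by Chebyshev's bound theta(x) <= x log 4; each of the at most
  X^(1/4) primes p <= X^(1/4) contributes at most log X <= 4 X^(1/4).
\<close>

text \<open>The odd central binomial coefficient is at most half of the row sum 2^(2m+1).\<close>

lemma central_binomial_odd_le: "(2*m+1) choose m \<le> (4::nat)^m"
proof -
  have "2 * ((2*m+1) choose m) = (\<Sum>k\<in>{m, m+1}. (2*m+1) choose k)"
    using binomial_symmetric[of m "2*m+1"] by simp
  also have "\<dots> \<le> (\<Sum>k\<le>2*m+1. (2*m+1) choose k)"
    by (intro sum_mono2) auto
  also have "\<dots> = 2^(2*m+1)"
    by (rule choose_row_sum)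
  finally have "2 * ((2*m+1) choose m) \<le> 2 * 4^m"
    by (simp add: power_mult)
  then show ?thesis by simp
qed

text \<open>Every prime in (m+1, 2m+1] divides (2m+1)!, but not m! (m+1)!.\<close>
lemma primes_between_dvd_binomial:
  "\<Prod>{p::nat. prime p \<and> m+1 < p \<and> p \<le> 2*m+1} dvd ((2*m+1) choose m)"
proof -
  define Q where "Q = {p::nat. prime p \<and> m+1 < p \<and> p \<le> 2*m+1}"
  have "\<Prod>Q dvd \<Prod>{1..2*m+1}"
    unfolding Q_def by (intro prod_dvd_prod_subset) auto
  also have "\<Prod>{1..2*m+1} = fact (2*m+1)"
    by (simp add: fact_prod)
  also have "(fact (2*m+1) :: nat) = (2*m+1 choose m) * (fact m * fact (m+1))"
    using binomial_fact_lemma[of m "2*m+1"] by (simp add: mult_2 ac_simps)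
  finally have dvd: "\<Prod>Q dvd (2*m+1 choose m) * (fact m * fact (m+1))" .
  have "coprime (\<Prod>Q) (fact m * fact (m+1) :: nat)"
  proof (intro prod_coprime_left)
    fix p assume "p \<in> Q"
    then have "prime p" "m + 1 < p" by (auto simp: Q_def)
    then have "\<not> p dvd (fact m * fact (m+1) :: nat)"
      by (auto simp: prime_dvd_mult_iff prime_dvd_fact_iff simp del: fact_Suc)
    with \<open>prime p\<close> show "coprime p (fact m * fact (m+1) :: nat)"
      by (rule prime_imp_coprime)
  qed
  with dvd show ?thesis
    unfolding Q_def by (simp add: coprime_dvd_mult_left_iff)
qed

text \<open>The primorial bound, by strong induction: even n > 2 are not prime, and for n = 2m+1 the
  primes above m+1 contribute at most binomial(2m+1, m) <= 4^m.\<close>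
lemma primorial_le: "\<Prod>{p::nat. prime p \<and> p \<le> n} \<le> 4^n"
proof (induction n rule: less_induct)
  case (less n)
  consider "n \<le> 2" | "2 < n" "even n" | m where "n = 2*m+1" "1 \<le> m"
  proof (cases "n \<le> 2 \<or> even n")
    case False
    then obtain m where "n = 2*m+1" by (metis oddE)
    with False that(3) show ?thesis by simp
  qed (metis that(1,2) not_le)
  then show ?case
  proof cases
    case 1
    then have "{p::nat. prime p \<and> p \<le> n} \<subseteq> {2}"
      by (auto dest: prime_ge_2_nat)
    then consider "{p::nat. prime p \<and> p \<le> n} = {}" | "{p::nat. prime p \<and> p \<le> n} = {2}"
      by blast
    then show ?thesis
    proof cases
      case 2
      then have "1 \<le> n"
        by (metis Suc_1 Suc_le_lessD less_imp_le_nat mem_Collect_eq singletonI)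
      then have "(2::nat) \<le> 4^n"
        using power_increasing[of 1 n "4::nat"] by simp
      with 2 show ?thesis by simp
    qed (simp only: prod.empty one_le_power)
  next
    case 2
    then have "\<not> prime n"
      using prime_odd_nat by blast
    then have "p \<le> n \<longleftrightarrow> p \<le> n - 1" if "prime p" for p
      using that 2 by (cases "p = n") auto
    then have "{p::nat. prime p \<and> p \<le> n} = {p. prime p \<and> p \<le> n - 1}"
      by blast
    also have "\<Prod>\<dots> \<le> 4^(n-1)"
      using less 2 by simp
    also have "\<dots> \<le> 4^n"
      by (intro power_increasing) auto
    finally show ?thesis .
  next
    case 3
    define Q where "Q = {p::nat. prime p \<and> m+1 < p \<and> p \<le> 2*m+1}"
    have "{p::nat. prime p \<and> p \<le> n} = {p. prime p \<and> p \<le> m+1} \<union> Q"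
      unfolding Q_def 3 by auto
    then have "\<Prod>{p::nat. prime p \<and> p \<le> n} = \<Prod>{p. prime p \<and> p \<le> m+1} * \<Prod>Q"
      by (simp add: prod.union_disjoint Q_def disjoint_iff)
    also have "\<dots> \<le> 4^(m+1) * 4^m"
    proof (intro mult_mono)
      show "\<Prod>{p::nat. prime p \<and> p \<le> m+1} \<le> 4^(m+1)"
        using 3 by (intro less.IH) simp
      have "\<Prod>Q \<le> (2*m+1) choose m"
        unfolding Q_def by (intro dvd_imp_le primes_between_dvd_binomial) auto
      also have "\<dots> \<le> 4^m"
        by (rule central_binomial_odd_le)
      finally show "\<Prod>Q \<le> 4^m" .
    qed auto
    also have "\<dots> = 4^n"
      by (simp add: 3 power_add[symmetric])
    finally show ?thesis .
  qed
qed

lemma chebyshev_theta_le: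
  fixes x :: real
  assumes "0 \<le> x"
  shows "(\<Sum>p\<in>{p::nat. prime p \<and> real p \<le> x}. ln (real p)) \<le> ln 4 * x"
proof -
  define n where "n = nat \<lfloor>x\<rfloor>"
  have "real p \<le> x \<longleftrightarrow> p \<le> n" for p
  proof
    assume "real p \<le> x"
    then show "p \<le> n"
      unfolding n_def by (rule le_nat_floor)
  next
    assume "p \<le> n"
    then have "real p \<le> real n" by simp
    also have "real n \<le> x"
      unfolding n_def using assms by (rule of_nat_floor)
    finally show "real p \<le> x" .
  qed
  then have primes: "{p::nat. prime p \<and> real p \<le> x} = {p. prime p \<and> p \<le> n}"
    by blast
  have "(\<Sum>p\<in>{p::nat. prime p \<and> p \<le> n}. ln (real p)) = ln (\<Prod>p\<in>{p. prime p \<and> p \<le> n}. real p)"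
    by (subst ln_prod) (auto dest: prime_gt_0_nat)
  also have "\<dots> = ln (real (\<Prod>{p. prime p \<and> p \<le> n}))"
    by simp
  also have "\<dots> \<le> ln (real (4^n))"
  proof (subst ln_le_cancel_iff)
    show "0 < real (\<Prod>{p. prime p \<and> p \<le> n})"
      by (simp only: of_nat_0_less_iff) (intro prod_pos, auto dest: prime_gt_0_nat)
    show "real (\<Prod>{p. prime p \<and> p \<le> n}) \<le> real (4^n)"
      by (simp only: of_nat_le_iff primorial_le)
  qed simp
  also have "\<dots> = ln 4 * real n"
    by (simp add: ln_realpow)
  also have "\<dots> \<le> ln 4 * x"
    unfolding n_def using assms by (intro mult_left_mono of_nat_floor) auto
  finally show ?thesis
    unfolding primes .
qed

lemma finite_primes_le: "finite {p::nat. prime p \<and> real p \<le> x}"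
  by (rule finite_subset[of _ "{..nat \<lfloor>x\<rfloor>}"]) (auto intro: le_nat_floor)

definition max_exponent :: "nat \<Rightarrow> nat \<Rightarrow> nat" where
  "max_exponent p X = nat \<lfloor>log (real p) (real X)\<rfloor>"

text \<open>A positive integer m <= X has p-adic valuation at most e_p(X), since p^(v_p m) <= m.\<close>
lemma multiplicity_le_max_exponent:
  assumes "prime p" "0 < m" "m \<le> X"
  shows "multiplicity p m \<le> max_exponent p X"
proof -
  have "p ^ multiplicity p m \<le> X"
    using multiplicity_dvd[of p m] assms(2,3) by (meson dvd_imp_le le_trans)
  then have "real p ^ multiplicity p m \<le> real X"
    by (metis of_nat_le_iff of_nat_power)
  then have "real (multiplicity p m) \<le> log (real p) (real X)"
    using prime_gt_1_nat[OF assms(1)] by (intro le_log_of_power) auto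
  then show ?thesis
    unfolding max_exponent_def by (rule le_nat_floor)
qed

lemma max_exponent_ln_le:
  assumes "prime p" "1 \<le> X"
  shows "real (max_exponent p X) * ln (real p) \<le> ln (real X)"
proof -
  have p: "1 < real p"
    using prime_gt_1_nat[OF assms(1)] by simp
  have "0 \<le> log (real p) (real X)"
    using p assms(2) by simp
  then have "real (max_exponent p X) \<le> ln (real X) / ln (real p)"
    unfolding max_exponent_def log_def by (rule of_nat_floor)
  with p show ?thesis
    by (simp add: pos_le_divide_eq)
qed

lemma max_exponent_le:
  assumes "prime p" "0 < X" "X < p ^ Suc k"
  shows "max_exponent p X \<le> k"
proof -
  have "real X < real p ^ Suc k"
    using assms(3) by (metis of_nat_less_iff of_nat_power)
  then have "log (real p) (real X) < real (Suc k)"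
    using assms(2) prime_gt_1_nat[OF assms(1)] by (intro log_of_power_less) auto
  then show ?thesis
    unfolding max_exponent_def by (simp add: nat_le_iff floor_le_iff)
qed

lemma multiplicity_Lcm_le:
  fixes S :: "nat set"
  assumes "finite S" "0 \<notin> S" "prime p" "\<And>s. s \<in> S \<Longrightarrow> multiplicity p s \<le> e"
  shows "multiplicity p (Lcm S) \<le> e"
proof (cases "S = {}")
  case False
  have "Lcm S \<noteq> 0"
    using assms(1,2) by (simp add: Lcm_0_iff)
  moreover have "subset_mset.bdd_above (prime_factorization ` S)"
    using assms(1) by (intro subset_mset.bdd_above_finite) auto
  ultimately have "multiplicity p (Lcm S) = (SUP s\<in>S. count (prime_factorization s) p)"
    using assms(3) False
    by (simp add: count_prime_factorization_prime [symmetric] prime_factorization_Lcm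
        count_Sup_multiset_nonempty image_image)
  also have "\<dots> \<le> e"
    using False assms(3,4) by (intro cSUP_least) (auto simp: count_prime_factorization_prime)
  finally show ?thesis .
qed simp

lemma multiplicity_polyf:
  assumes "prime p" "\<forall>j\<in>{1..N}. b j > 0"
  shows "multiplicity p (polyf N a b d k) = (\<Sum>j=1..N. d j * multiplicity p (a j * k + b j))"
proof -
  have "multiplicity p (polyf N a b d k) = (\<Sum>j=1..N. multiplicity p ((a j * k + b j) ^ d j))"
    unfolding polyf_def using assms
    by (intro prime_elem_multiplicity_prod_distrib) auto
  also have "\<dots> = (\<Sum>j=1..N. d j * multiplicity p (a j * k + b j))"
    using assms by (intro sum.cong refl prime_elem_multiplicity_power_distrib) auto
  finally show ?thesis .
qed

lemma multiplicity_Lcm_polyf_le: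
  assumes "prime p" "\<forall>j\<in>{1..N}. b j > 0" "\<forall>j\<in>{1..N}. a j * n + b j \<le> X"
  shows "multiplicity p (Lcm (polyf N a b d ` {1..n})) \<le> (\<Sum>j=1..N. d j) * max_exponent p X"
proof (rule multiplicity_Lcm_le)
  show "0 \<notin> polyf N a b d ` {1..n}"
    using assms(2) by (fastforce simp: polyf_def)
  fix s assume "s \<in> polyf N a b d ` {1..n}"
  then obtain k where k: "k \<in> {1..n}" "s = polyf N a b d k" by blast
  have "multiplicity p (a j * k + b j) \<le> max_exponent p X" if "j \<in> {1..N}" for j
  proof (rule multiplicity_le_max_exponent[OF assms(1)])
    show "0 < a j * k + b j"
      using assms(2) that by auto
    have "a j * k + b j \<le> a j * n + b j"
      using k by simp
    then show "a j * k + b j \<le> X"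
      using assms(3) that by (blast intro: le_trans)
  qed
  then have "multiplicity p s \<le> (\<Sum>j=1..N. d j * max_exponent p X)"
    unfolding k(2) multiplicity_polyf[OF assms(1,2)] by (intro sum_mono mult_left_mono) auto
  then show "multiplicity p s \<le> (\<Sum>j=1..N. d j) * max_exponent p X"
    by (simp add: sum_distrib_right)
qed (use assms(1) in auto)

text \<open>log x <= 4 x^(1/4), from log y <= y - 1 applied to y = x^(1/4).\<close>
lemma ln_le_fourth_root:
  fixes x :: real
  assumes "0 < x"
  shows "ln x \<le> 4 * sqrt (sqrt x)"
proof -
  have "ln x = 4 * ln (sqrt (sqrt x))"
    using assms by (simp add: ln_sqrt)
  also have "\<dots> \<le> 4 * sqrt (sqrt x)"
    using ln_le_minus_one[of "sqrt (sqrt x)"] assms by simp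
  finally show ?thesis .
qed

lemma card_fourth_powers_le:
  "real (card {p::nat. 0 < p \<and> p^4 \<le> X}) \<le> sqrt (sqrt (real X))"
proof -
  define q where "q = nat \<lfloor>sqrt (sqrt (real X))\<rfloor>"
  have "{p::nat. 0 < p \<and> p^4 \<le> X} \<subseteq> {1..q}"
  proof
    fix p :: nat assume "p \<in> {p. 0 < p \<and> p^4 \<le> X}"
    then have "0 < p" "(real p ^ 2) ^ 2 \<le> real X"
      by (auto simp flip: power_mult of_nat_power)
    then have "real p \<le> sqrt (sqrt (real X))"
      by (intro real_le_rsqrt)
    then show "p \<in> {1..q}"
      using \<open>0 < p\<close> unfolding q_def by (auto intro: le_nat_floor)
  qed
  then have "card {p::nat. 0 < p \<and> p^4 \<le> X} \<le> q"
    using card_mono[of "{1..q}"] by fastforce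
  then show ?thesis
    unfolding q_def by (meson of_nat_floor of_nat_le_iff order_trans real_sqrt_ge_zero of_nat_0_le_iff)
qed

lemma max_exponent_ln_split:
  assumes "prime p" "1 \<le> X"
  shows "real (max_exponent p X) * ln (real p) \<le> 3 * ln (real p) + (if p^4 \<le> X then ln (real X) else 0)"
proof -
  have ln_p: "0 \<le> ln (real p)"
    using prime_ge_1_nat[OF assms(1)] by simp
  show ?thesis
  proof (cases "p^4 \<le> X")
    case True
    then show ?thesis
      using max_exponent_ln_le[OF assms] ln_p by simp
  next
    case False
    then have "max_exponent p X \<le> 3"
      using assms by (intro max_exponent_le) auto
    then have "real (max_exponent p X) * ln (real p) \<le> 3 * ln (real p)"
      using ln_p by (intro mult_right_mono) auto
    with False show ?thesis by simp
  qed
qed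

text \<open>Primes with p^4 > X have e_p(X) <= 3 and are handled by Chebyshev's bound; each of the few
  remaining primes contributes at most log X.\<close>
lemma max_exponent_sum_le:
  assumes "1 \<le> X"
  shows "(\<Sum>p\<in>{p. prime p \<and> real p \<le> sqrt (real X)}. real (max_exponent p X) * ln (real p))
         \<le> (3 * ln 4 + 4) * sqrt (real X)"
proof -
  define P where "P = {p. prime p \<and> real p \<le> sqrt (real X)}"
  define Q where "Q = {p::nat. 0 < p \<and> p^4 \<le> X}"
  have "finite P"
    unfolding P_def by (rule finite_primes_le)
  have "real (max_exponent p X) * ln (real p) \<le> 3 * ln (real p) + (if p \<in> Q then ln (real X) else 0)"
    if "p \<in> P" for p
    using that max_exponent_ln_split[OF _ assms, of p] by (simp add: P_def Q_def prime_gt_0_nat)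
  then have "(\<Sum>p\<in>P. real (max_exponent p X) * ln (real p))
      \<le> (\<Sum>p\<in>P. 3 * ln (real p) + (if p \<in> Q then ln (real X) else 0))"
    by (rule sum_mono)
  also have "\<dots> = 3 * (\<Sum>p\<in>P. ln (real p)) + real (card (P \<inter> Q)) * ln (real X)"
    using \<open>finite P\<close> by (simp add: sum.distrib sum_distrib_left sum.If_cases)
  also have "\<dots> \<le> 3 * (ln 4 * sqrt (real X)) + real (card Q) * ln (real X)"
  proof (intro add_mono mult_left_mono mult_right_mono)
    show "(\<Sum>p\<in>P. ln (real p)) \<le> ln 4 * sqrt (real X)"
      unfolding P_def by (intro chebyshev_theta_le) simp
    have "Q \<subseteq> {..X}"
    proof
      fix p assume "p \<in> Q"
      then have "1 \<le> p" "p^4 \<le> X"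
        by (auto simp: Q_def)
      then show "p \<in> {..X}"
        using self_le_power[of p 4] by simp
    qed
    then have "finite Q"
      by (rule finite_subset) simp
    then show "real (card (P \<inter> Q)) \<le> real (card Q)"
      by (simp add: card_mono)
  qed (use assms in simp_all)
  also have "\<dots> \<le> 3 * (ln 4 * sqrt (real X)) + sqrt (sqrt (real X)) * (4 * sqrt (sqrt (real X)))"
    using card_fourth_powers_le[of X] ln_le_fourth_root[of "real X"] assms
    by (intro add_mono[OF order_refl] mult_mono) (auto simp: Q_def)
  also have "\<dots> = (3 * ln 4 + 4) * sqrt (real X)"
    by (simp add: algebra_simps)
  finally show ?thesis
    unfolding P_def .
qed

lemma Mn_le_sqrt:
  assumes "N \<ge> 1" "\<forall>j\<in>{1..N}. a j * n + b j \<le> X"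
  shows "Mn N a b n \<le> sqrt (real X)"
  unfolding Mn_def using assms by (subst Max_le_iff) (auto simp del: of_nat_add of_nat_mult)

lemma Lcm_polyf_sum_le:
  assumes "\<forall>j\<in>{1..N}. b j > 0" "\<forall>j\<in>{1..N}. a j * n + b j \<le> X" "1 \<le> X"
  shows "(\<Sum>p\<in>{p. prime p \<and> real p \<le> sqrt (real X)}.
            real (multiplicity p (Lcm (polyf N a b d ` {1..n}))) * ln (real p))
         \<le> real (\<Sum>j=1..N. d j) * (3 * ln 4 + 4) * sqrt (real X)"
proof -
  define D where "D = (\<Sum>j=1..N. d j)"
  have "(\<Sum>p\<in>{p. prime p \<and> real p \<le> sqrt (real X)}.
            real (multiplicity p (Lcm (polyf N a b d ` {1..n}))) * ln (real p))
        \<le> (\<Sum>p\<in>{p. prime p \<and> real p \<le> sqrt (real X)}. real D * (real (max_exponent p X) * ln (real p)))"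
  proof (intro sum_mono)
    fix p assume "p \<in> {p. prime p \<and> real p \<le> sqrt (real X)}"
    then have p: "prime p" "0 \<le> ln (real p)"
      using prime_ge_1_nat[of p] by auto
    have "real (multiplicity p (Lcm (polyf N a b d ` {1..n}))) \<le> real D * real (max_exponent p X)"
      using multiplicity_Lcm_polyf_le[OF p(1) assms(1,2), of d] unfolding D_def
      by (metis of_nat_le_iff of_nat_mult)
    then show "real (multiplicity p (Lcm (polyf N a b d ` {1..n}))) * ln (real p)
               \<le> real D * (real (max_exponent p X) * ln (real p))"
      using p(2) by (simp add: mult.assoc[symmetric] mult_right_mono)
  qed
  also have "\<dots> \<le> real D * ((3 * ln 4 + 4) * sqrt (real X))"
    by (simp only: sum_distrib_left[symmetric]) (intro mult_left_mono max_exponent_sum_le assms(3); simp)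
  finally show ?thesis
    unfolding D_def by (simp add: mult.assoc)
qed

lemma linear_factor_le:
  fixes a b :: "nat \<Rightarrow> nat"
  assumes "1 \<le> n" "j \<in> {1..N}"
  shows "a j * n + b j \<le> ((\<Sum>i=1..N. a i) + (\<Sum>i=1..N. b i)) * n"
proof -
  have "a j \<le> (\<Sum>i=1..N. a i)" "b j \<le> (\<Sum>i=1..N. b i)"
    using assms(2) by (auto intro: member_le_sum)
  moreover have "(\<Sum>i=1..N. b i) \<le> (\<Sum>i=1..N. b i) * n"
    using assms(1) by simp
  ultimately have "a j * n \<le> (\<Sum>i=1..N. a i) * n" "b j \<le> (\<Sum>i=1..N. b i) * n"
    by (simp, linarith)
  then show ?thesis
    by (simp add: add_mult_distrib add_mono)
qed

lemma Lcm_polyf_Mn_sum_le: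
  fixes a b d :: "nat \<Rightarrow> nat"
  assumes "N \<ge> 1" "\<forall>j\<in>{1..N}. b j > 0" "1 \<le> n"
  defines "S \<equiv> (\<Sum>j=1..N. a j) + (\<Sum>j=1..N. b j)"
  shows "(\<Sum>p\<in>{p. prime p \<and> real p \<le> Mn N a b n}.
            real (multiplicity p (Lcm (polyf N a b d ` {1..n}))) * ln (real p))
         \<le> real (\<Sum>j=1..N. d j) * (3 * ln 4 + 4) * sqrt (real S) * sqrt (real n)"
proof -
  have bounded: "\<forall>j\<in>{1..N}. a j * n + b j \<le> S * n"
    unfolding S_def using linear_factor_le[OF assms(3)] by blast
  have "0 < b 1" "a 1 * n + b 1 \<le> S * n"
    using assms(1,2) bounded by auto
  then have "1 \<le> S * n"
    by linarith
  let ?T = "\<lambda>p. real (multiplicity p (Lcm (polyf N a b d ` {1..n}))) * ln (real p)"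
  have "(\<Sum>p\<in>{p. prime p \<and> real p \<le> Mn N a b n}. ?T p)
      \<le> (\<Sum>p\<in>{p. prime p \<and> real p \<le> sqrt (real (S * n))}. ?T p)"
    using Mn_le_sqrt[OF assms(1) bounded]
    by (intro sum_mono2 finite_primes_le mult_nonneg_nonneg) (auto dest: prime_ge_1_nat)
  also have "\<dots> \<le> real (\<Sum>j=1..N. d j) * (3 * ln 4 + 4) * sqrt (real (S * n))"
    by (rule Lcm_polyf_sum_le[OF assms(2) bounded \<open>1 \<le> S * n\<close>])
  finally show ?thesis
    by (simp add: real_sqrt_mult mult.assoc)
qed

theorem mainTheorem5:
  fixes N :: nat and a b d :: "nat \<Rightarrow> nat"
  assumes "N \<ge> 1"
    and "\<forall>j\<in>{1..N}. a j > 0 \<and> b j > 0 \<and> d j > 0"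
  shows "(\<lambda>n. \<Sum>p\<in>{p. prime p \<and> real p \<le> Mn N a b n}.
            real (multiplicity p (Lcm (polyf N a b d ` {1..n}))) * ln (real p))
         \<in> O(\<lambda>n. sqrt (real n))"
proof (rule bigoI)
  define K where "K = real (\<Sum>j=1..N. d j) * (3 * ln 4 + 4) * sqrt (real ((\<Sum>j=1..N. a j) + (\<Sum>j=1..N. b j)))"
  let ?T = "\<lambda>n p. real (multiplicity p (Lcm (polyf N a b d ` {1..n}))) * ln (real p)"
  have "norm (\<Sum>p\<in>{p. prime p \<and> real p \<le> Mn N a b n}. ?T n p) \<le> K * norm (sqrt (real n))"
    if "n \<ge> 1" for n
  proof -
    have "0 \<le> (\<Sum>p\<in>{p. prime p \<and> real p \<le> Mn N a b n}. ?T n p)"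
      by (intro sum_nonneg mult_nonneg_nonneg) (auto dest: prime_ge_1_nat)
    moreover have "(\<Sum>p\<in>{p. prime p \<and> real p \<le> Mn N a b n}. ?T n p) \<le> K * sqrt (real n)"
      using Lcm_polyf_Mn_sum_le[OF assms(1) _ that, of b a d] assms(2) by (simp add: K_def)
    ultimately show ?thesis
      by simp
  qed
  then show "\<forall>\<^sub>F n in at_top. norm (\<Sum>p\<in>{p. prime p \<and> real p \<le> Mn N a b n}. ?T n p)
               \<le> K * norm (sqrt (real n))"
    unfolding eventually_at_top_linorder by blast
qed

end
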